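(* Let $d\ge2$, $L\ge1$, $\sigma>0$, $\lambda>0$. Let $\mu_0^\star$ be uniform on $\mathbb{S}^{d-1}$ and, conditionally on $\mu_0^\star$, let $\mu_1^\star$ have an arbitrary distribution on $\mathbb{S}^{d-1}\cap(\mu_0^\star)^\perp$. Conditionally on $(\mu_0^\star,\mu_1^\star)$, let $(X_\ell,Z_\ell)_{1\le\ell\le L}$ be i.i.d. with $Z_\ell\sim\mathrm{Bernoulli}(1/2)$ and $X_\ell\mid\mu_0^\star,\mu_1^\star,Z_\ell\sim\mathcal{N}(\mu_{Z_\ell}^\star,\sigma^2I_d)$. Then for $c\in\{0,1\}$, $$\mathbb{E}[T^{\mathrm{ctx}}(\mathbb{X})_1\mid\mu_1^\star,\mu_0^\star,Z_1=c]=\frac{2\lambda}{L}\Big[(1+(d+2)\sigma^2)+(L-1)\big(\tfrac12+\sigma^2\big)\Big]\mu_c^\star.$$ In particular, for $\lambda=\frac{L}{2}\cdot\frac{1}{1+(d+2)\sigma^2+(L-1)(\frac12+\sigma^2)}$, this conditional expectation equals $\mu_c^\star$.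
   Context: $\mathbb{X}\in\mathbb{R}^{L\times d}$ has rows $X_1,\dots,X_L$, and the parameter-free attention layer is $T^{\mathrm{ctx}}(\mathbb{X})_\ell=\frac{2\lambda}{L}\sum_{k=1}^L(X_\ell^\top X_k)\,X_k$. *)

theory Defs
  imports "HOL-Probability.Probability"
begin

definition T_ctx :: "real \<Rightarrow> nat \<Rightarrow> (nat \<Rightarrow> real^'d) \<Rightarrow> nat \<Rightarrow> real^'d" where
  "T_ctx lam L X l = (2 * lam / real L) *\<^sub>R (\<Sum>k\<in>{1..L}. (X l \<bullet> X k) *\<^sub>R X k)"

definition gauss_pdf :: "real^'d \<Rightarrow> real \<Rightarrow> real^'d \<Rightarrow> real" where
  "gauss_pdf mu sig x = (\<Prod>i\<in>UNIV. normal_density (mu $ i) sig (x $ i))"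

text \<open>Law of one pair (Z, X): Z ~ Bernoulli(1/2) (True encodes Z = 1, False encodes Z = 0),
  X | Z ~ N(mu_Z, sig^2 I_d).\<close>
definition pair_law :: "real^'d \<Rightarrow> real^'d \<Rightarrow> real \<Rightarrow> (bool \<times> (real^'d)) measure" where
  "pair_law mu0 mu1 sig =
     density (count_space UNIV \<Otimes>\<^sub>M lborel)
       (\<lambda>(z, x). ennreal (1/2 * gauss_pdf (if z then mu1 else mu0) sig x))"

definition sample_law :: "nat \<Rightarrow> real^'d \<Rightarrow> real^'d \<Rightarrow> real \<Rightarrow> (nat \<Rightarrow> bool \<times> (real^'d)) measure" where
  "sample_law L mu0 mu1 sig = PiM {1..L} (\<lambda>_. pair_law mu0 mu1 sig)"

definition cond_exp_event :: "'a measure \<Rightarrow> 'a set \<Rightarrow> ('a \<Rightarrow> 'b::{banach, second_countable_topology}) \<Rightarrow> 'b" where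
  "cond_exp_event M E f = (1 / measure M E) *\<^sub>R (LINT w:E|M. f w)"

end

(*
  The term k = 1 is a third moment of N(mu_c, sig^2 I):
  E[(X . X) X] = (|mu_c|^2 + (d + 2) sig^2) mu_c.
  For k <> 1 the sample (Z_k, X_k) is independent of (Z_1, X_1), and X_k is an equal mixture of
  N(mu_0, sig^2 I) and N(mu_1, sig^2 I), so
  E[(X_1 . X_k) X_k] = E[X_k X_k^T] mu_c = ((mu_0 mu_0^T + mu_1 mu_1^T) / 2 + sig^2 I) mu_c
                     = (1/2 + sig^2) mu_c
  by orthonormality. As the Gaussian density is a product over coordinates, every moment reduces,
  coordinate by coordinate, to moments of the one-dimensional normal distribution.
*)
theory Submission
  imports Defs
begin

definition normal_central_moment :: "real \<Rightarrow> nat \<Rightarrow> real" where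
  "normal_central_moment \<sigma> k =
     (if even k then fact k / ((2 / \<sigma>\<^sup>2) ^ (k div 2) * fact (k div 2)) else 0)"

definition normal_moment :: "real \<Rightarrow> real \<Rightarrow> nat \<Rightarrow> real" where
  "normal_moment \<mu> \<sigma> k = (\<Sum>i\<le>k. real (k choose i) * normal_central_moment \<sigma> i * \<mu> ^ (k - i))"

lemma has_bochner_integral_normal_central_moment:
  assumes "\<sigma> > 0"
  shows "has_bochner_integral lborel (\<lambda>x. normal_density \<mu> \<sigma> x * (x - \<mu>) ^ k) (normal_central_moment \<sigma> k)"
proof (cases "even k")
  case True
  then obtain m where "k = 2 * m" by blast
  then show ?thesis using normal_moment_even[OF assms] by (simp add: normal_central_moment_def)
next
  case False
  then obtain m where "k = 2 * m + 1" using oddE by blast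
  then show ?thesis using normal_moment_odd[OF assms] by (simp add: normal_central_moment_def)
qed

lemma has_bochner_integral_normal_moment:
  assumes "\<sigma> > 0"
  shows "has_bochner_integral lborel (\<lambda>x. normal_density \<mu> \<sigma> x * x ^ k) (normal_moment \<mu> \<sigma> k)"
proof -
  have "x ^ k = (\<Sum>i\<le>k. real (k choose i) * (x - \<mu>) ^ i * \<mu> ^ (k - i))" for x
    using binomial_ring[of "x - \<mu>" \<mu> k] by simp
  then have "(\<lambda>x. normal_density \<mu> \<sigma> x * x ^ k) =
      (\<lambda>x. \<Sum>i\<le>k. real (k choose i) * \<mu> ^ (k - i) * (normal_density \<mu> \<sigma> x * (x - \<mu>) ^ i))"
    by (simp add: sum_distrib_left algebra_simps)
  moreover have "normal_moment \<mu> \<sigma> k =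
      (\<Sum>i\<le>k. real (k choose i) * \<mu> ^ (k - i) * normal_central_moment \<sigma> i)"
    by (simp add: normal_moment_def algebra_simps)
  moreover have "has_bochner_integral lborel
      (\<lambda>x. \<Sum>i\<le>k. real (k choose i) * \<mu> ^ (k - i) * (normal_density \<mu> \<sigma> x * (x - \<mu>) ^ i))
      (\<Sum>i\<le>k. real (k choose i) * \<mu> ^ (k - i) * normal_central_moment \<sigma> i)"
    by (intro has_bochner_integral_sum has_bochner_integral_mult_right
        has_bochner_integral_normal_central_moment assms)
  ultimately show ?thesis by simp
qed

lemma normal_moment_0 [simp]: "normal_moment \<mu> \<sigma> 0 = 1"
  by (simp add: normal_moment_def normal_central_moment_def)

(* Stated with Suc 0, the simp normal form of 1 :: nat. *)
lemma normal_moment_1 [simp]: "normal_moment \<mu> \<sigma> (Suc 0) = \<mu>"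
  by (simp add: normal_moment_def normal_central_moment_def)

lemma normal_moment_2:
  "\<sigma> > 0 \<Longrightarrow> normal_moment \<mu> \<sigma> 2 = \<mu>\<^sup>2 + \<sigma>\<^sup>2"
  by (simp add: normal_moment_def normal_central_moment_def numeral_2_eq_2)

lemma normal_moment_3:
  "\<sigma> > 0 \<Longrightarrow> normal_moment \<mu> \<sigma> 3 = \<mu> ^ 3 + 3 * \<mu> * \<sigma>\<^sup>2"
  by (simp add: normal_moment_def normal_central_moment_def numeral_3_eq_3)

lemma has_bochner_integral_lborel_vec_prod:
  fixes f :: "'n::finite \<Rightarrow> real \<Rightarrow> real"
  assumes f: "\<And>i. integrable lborel (f i)"
  shows "has_bochner_integral lborel (\<lambda>x::real^'n. \<Prod>i\<in>UNIV. f i (x $ i))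
           (\<Prod>i\<in>UNIV. integral\<^sup>L lborel (f i))"
proof -
  interpret product_sigma_finite "\<lambda>_::real^'n. lborel :: real measure"
    by (simp add: product_sigma_finite_def lborel.sigma_finite_measure_axioms)
  have [measurable]: "f i \<in> borel_measurable borel" for i
    using borel_measurable_integrable[OF f] by simp
  let ?e = "\<lambda>i::'n. axis i (1::real)"
  have inj: "inj ?e"
    by (simp add: inj_def axis_eq_axis)
  have Basis: "(Basis :: (real^'n) set) = range ?e"
    by (auto simp: Basis_vec_def)
  define F where "F b = f (inv ?e b)" for b
  have prod_Basis: "(\<Prod>b\<in>Basis. g b) = (\<Prod>i\<in>UNIV. g (?e i))" for g :: "real^'n \<Rightarrow> real"
    unfolding Basis using inj by (simp add: prod.reindex)
  have inv_e: "inv ?e (?e i) = i" for i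
    by (rule inv_f_f[OF inj])
  have coord: "(\<Sum>b\<in>Basis. y b * b $ i) = y (?e i)" for y :: "real^'n \<Rightarrow> real" and i
    unfolding Basis using inj by (simp add: sum.reindex axis_def if_distrib cong: if_cong)
  have "has_bochner_integral (\<Pi>\<^sub>M b\<in>Basis. lborel) (\<lambda>y. \<Prod>b\<in>Basis. F b (y b))
      (\<Prod>b\<in>Basis. integral\<^sup>L lborel (F b))"
    using product_integral_prod[of Basis F] product_integrable_prod[of Basis F] f
    by (simp add: has_bochner_integral_iff F_def)
  then have "has_bochner_integral (\<Pi>\<^sub>M b\<in>Basis. lborel)
      (\<lambda>y. (\<lambda>x::real^'n. \<Prod>i\<in>UNIV. f i (x $ i)) (\<Sum>b\<in>Basis. y b *\<^sub>R b))
      (\<Prod>i\<in>UNIV. integral\<^sup>L lborel (f i))"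
    by (simp add: prod_Basis coord inv_e F_def)
  then have "has_bochner_integral (distr (\<Pi>\<^sub>M b\<in>Basis. lborel) borel (\<lambda>y. \<Sum>b\<in>Basis. y b *\<^sub>R b))
      (\<lambda>x::real^'n. \<Prod>i\<in>UNIV. f i (x $ i)) (\<Prod>i\<in>UNIV. integral\<^sup>L lborel (f i))"
    by (intro has_bochner_integral_distr) auto
  then show ?thesis
    by (simp add: lborel_eq[symmetric])
qed

lemma has_bochner_integral_vec_componentwise:
  fixes f :: "'a \<Rightarrow> real^'n"
  assumes "\<And>i. has_bochner_integral M (\<lambda>x. f x $ i) (I $ i)"
  shows "has_bochner_integral M f I"
proof -
  have expansion: "(\<Sum>i\<in>UNIV. (y $ i) *\<^sub>R axis i 1) = y" for y :: "real^'n"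
    using basis_expansion[of y] by (simp add: scalar_mult_eq_scaleR)
  have "has_bochner_integral M (\<lambda>x. \<Sum>i\<in>UNIV. (f x $ i) *\<^sub>R axis i (1::real))
      (\<Sum>i\<in>UNIV. (I $ i) *\<^sub>R axis i 1)"
    using assms by (intro has_bochner_integral_sum has_bochner_integral_scaleR_left) auto
  then show ?thesis
    unfolding expansion .
qed

lemma has_bochner_integral_gauss_pdf_monomial:
  fixes \<mu> :: "real^'n" and n :: "'n \<Rightarrow> nat"
  assumes "\<sigma> > 0"
  shows "has_bochner_integral lborel (\<lambda>x. gauss_pdf \<mu> \<sigma> x * (\<Prod>i\<in>UNIV. (x $ i) ^ n i))
           (\<Prod>i\<in>UNIV. normal_moment (\<mu> $ i) \<sigma> (n i))"
proof -
  have "has_bochner_integral lborel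
      (\<lambda>x::real^'n. \<Prod>i\<in>UNIV. normal_density (\<mu> $ i) \<sigma> (x $ i) * (x $ i) ^ n i)
      (\<Prod>i\<in>UNIV. normal_moment (\<mu> $ i) \<sigma> (n i))"
    using has_bochner_integral_lborel_vec_prod[of "\<lambda>i t. normal_density (\<mu> $ i) \<sigma> t * t ^ n i"]
      has_bochner_integral_normal_moment[OF assms]
    by (simp add: has_bochner_integral_iff)
  then show ?thesis
    by (simp add: gauss_pdf_def prod.distrib)
qed

lemma has_bochner_integral_gauss_pdf_two_coordinates:
  fixes \<mu> :: "real^'n"
  assumes "\<sigma> > 0"
  shows "has_bochner_integral lborel (\<lambda>x. gauss_pdf \<mu> \<sigma> x * ((x $ j) ^ a * (x $ i) ^ b))
           (if i = j then normal_moment (\<mu> $ j) \<sigma> (a + b)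
            else normal_moment (\<mu> $ j) \<sigma> a * normal_moment (\<mu> $ i) \<sigma> b)"
proof -
  define n where "n m = (if m = j then a else 0) + (if m = i then b else 0)" for m
  have "(\<Prod>m\<in>UNIV. (x $ m) ^ n m) = (x $ j) ^ a * (x $ i) ^ b" for x :: "real^'n"
    by (simp add: n_def power_add prod.distrib if_distrib[of "power _"] cong: if_cong)
  moreover have "(\<Prod>m\<in>UNIV. normal_moment (\<mu> $ m) \<sigma> (n m)) =
      (if i = j then normal_moment (\<mu> $ j) \<sigma> (a + b)
       else normal_moment (\<mu> $ j) \<sigma> a * normal_moment (\<mu> $ i) \<sigma> b)"
  proof (cases "i = j")
    case True
    then have "(\<Prod>m\<in>UNIV. normal_moment (\<mu> $ m) \<sigma> (n m)) =
        (\<Prod>m\<in>UNIV. if m = j then normal_moment (\<mu> $ j) \<sigma> (a + b) else 1)"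
      by (intro prod.cong) (auto simp: n_def)
    then show ?thesis using True by simp
  next
    case False
    then have "(\<Prod>m\<in>UNIV. normal_moment (\<mu> $ m) \<sigma> (n m)) =
        (\<Prod>m\<in>UNIV. (if m = j then normal_moment (\<mu> $ j) \<sigma> a else 1) *
                   (if m = i then normal_moment (\<mu> $ i) \<sigma> b else 1))"
      by (intro prod.cong) (auto simp: n_def)
    then show ?thesis using False by (simp add: prod.distrib)
  qed
  ultimately show ?thesis
    using has_bochner_integral_gauss_pdf_monomial[OF assms, of \<mu> n] by simp
qed

lemma has_bochner_integral_gauss_pdf:
  "\<sigma> > 0 \<Longrightarrow> has_bochner_integral lborel (gauss_pdf \<mu> \<sigma>) 1"
  using has_bochner_integral_gauss_pdf_two_coordinates[of \<sigma> \<mu> j 0 j 0] by simp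

lemma has_bochner_integral_gauss_pdf_coordinate:
  "\<sigma> > 0 \<Longrightarrow> has_bochner_integral lborel (\<lambda>x. gauss_pdf \<mu> \<sigma> x * x $ i) (\<mu> $ i)"
  using has_bochner_integral_gauss_pdf_two_coordinates[of \<sigma> \<mu> i 1 i 0] by simp

lemma has_bochner_integral_gauss_pdf_coordinate_product:
  assumes "\<sigma> > 0"
  shows "has_bochner_integral lborel (\<lambda>x. gauss_pdf \<mu> \<sigma> x * (x $ j * x $ i))
           (\<mu> $ j * \<mu> $ i + (if i = j then \<sigma>\<^sup>2 else 0))"
proof -
  have moment: "(if i = j then normal_moment (\<mu> $ j) \<sigma> 2
                 else normal_moment (\<mu> $ j) \<sigma> 1 * normal_moment (\<mu> $ i) \<sigma> 1)
      = \<mu> $ j * \<mu> $ i + (if i = j then \<sigma>\<^sup>2 else 0)"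
    using assms by (simp add: normal_moment_2 power2_eq_square)
  show ?thesis
    using has_bochner_integral_gauss_pdf_two_coordinates[OF assms, of \<mu> j 1 i 1]
    unfolding one_add_one power_one_right moment .
qed

lemma has_bochner_integral_gauss_pdf_norm_sq_coordinate:
  fixes \<mu> :: "real^'n"
  assumes "\<sigma> > 0"
  shows "has_bochner_integral lborel (\<lambda>x. gauss_pdf \<mu> \<sigma> x * ((x \<bullet> x) * x $ i))
           ((\<mu> \<bullet> \<mu> + (real CARD('n) + 2) * \<sigma>\<^sup>2) * \<mu> $ i)"
proof -
  have moment: "(if i = j then normal_moment (\<mu> $ j) \<sigma> 3
                 else normal_moment (\<mu> $ j) \<sigma> 2 * normal_moment (\<mu> $ i) \<sigma> 1)
      = ((\<mu> $ j)\<^sup>2 + \<sigma>\<^sup>2) * \<mu> $ i + (if i = j then 2 * \<sigma>\<^sup>2 * \<mu> $ j else 0)" for j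
    using assms by (simp add: normal_moment_2 normal_moment_3 power2_eq_square power3_eq_cube algebra_simps)
  have three: "(2::nat) + 1 = 3"
    by simp
  have "has_bochner_integral lborel (\<lambda>x. gauss_pdf \<mu> \<sigma> x * ((x $ j)\<^sup>2 * x $ i))
      (((\<mu> $ j)\<^sup>2 + \<sigma>\<^sup>2) * \<mu> $ i + (if i = j then 2 * \<sigma>\<^sup>2 * \<mu> $ j else 0))" for j
    using has_bochner_integral_gauss_pdf_two_coordinates[OF assms, of \<mu> j 2 i 1]
    unfolding three power_one_right moment .
  then have "has_bochner_integral lborel (\<lambda>x. \<Sum>j\<in>UNIV. gauss_pdf \<mu> \<sigma> x * ((x $ j)\<^sup>2 * x $ i))
      (\<Sum>j\<in>UNIV. ((\<mu> $ j)\<^sup>2 + \<sigma>\<^sup>2) * \<mu> $ i + (if i = j then 2 * \<sigma>\<^sup>2 * \<mu> $ j else 0))"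
    by (intro has_bochner_integral_sum)
  moreover have "(\<Sum>j\<in>UNIV. ((\<mu> $ j)\<^sup>2 + \<sigma>\<^sup>2) * \<mu> $ i + (if i = j then 2 * \<sigma>\<^sup>2 * \<mu> $ j else 0)) =
      (\<mu> \<bullet> \<mu> + (real CARD('n) + 2) * \<sigma>\<^sup>2) * \<mu> $ i"
    by (simp add: sum.distrib inner_vec_def sum_distrib_left sum_distrib_right power2_eq_square
        algebra_simps)
  moreover have "(\<Sum>j\<in>UNIV. gauss_pdf \<mu> \<sigma> x * ((x $ j)\<^sup>2 * x $ i)) =
      gauss_pdf \<mu> \<sigma> x * ((x \<bullet> x) * x $ i)" for x :: "real^'n"
    by (simp add: inner_vec_def sum_distrib_left sum_distrib_right power2_eq_square)
  ultimately show ?thesis by simp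
qed

lemma has_bochner_integral_count_space_pair:
  fixes F :: "'a::finite \<times> 'b \<Rightarrow> 'c::{banach, second_countable_topology}"
  assumes "sigma_finite_measure M"
    and F: "\<And>z. has_bochner_integral M (\<lambda>x. F (z, x)) (I z)"
  shows "has_bochner_integral (count_space UNIV \<Otimes>\<^sub>M M) F (\<Sum>z\<in>UNIV. I z)"
proof -
  interpret pair_sigma_finite "count_space (UNIV :: 'a set)" M
    by (intro pair_sigma_finite.intro sigma_finite_measure_count_space_finite assms) simp
  have integrable: "integrable M (\<lambda>x. F (z, x))" for z
    using F by (simp add: has_bochner_integral_iff)
  have [measurable]: "F \<in> borel_measurable (count_space UNIV \<Otimes>\<^sub>M M)"
    using integrable by (intro measurable_pair_measure_countable1) auto
  have "integrable (count_space UNIV \<Otimes>\<^sub>M M) F"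
    using integrable by (intro Fubini_integrable) (auto intro: integrable_count_space)
  moreover have "integral\<^sup>L (count_space UNIV \<Otimes>\<^sub>M M) F = (\<Sum>z\<in>UNIV. I z)"
    using integral_fst'[OF calculation] F
    by (simp add: lebesgue_integral_count_space_finite has_bochner_integral_iff)
  ultimately show ?thesis
    by (simp add: has_bochner_integral_iff)
qed

lemma has_bochner_integral_pair_law:
  fixes h :: "bool \<Rightarrow> real^'d \<Rightarrow> 'b::{banach, second_countable_topology}"
  assumes [measurable]: "\<And>z. h z \<in> borel_measurable borel"
    and I0: "has_bochner_integral lborel (\<lambda>x. gauss_pdf \<mu>0 \<sigma> x *\<^sub>R h False x) I0"
    and I1: "has_bochner_integral lborel (\<lambda>x. gauss_pdf \<mu>1 \<sigma> x *\<^sub>R h True x) I1"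
  shows "has_bochner_integral (pair_law \<mu>0 \<mu>1 \<sigma>) (\<lambda>(z, x). h z x) ((1 / 2) *\<^sub>R (I0 + I1))"
proof -
  define g where "g = (\<lambda>(z, x). 1 / 2 * gauss_pdf (if z then \<mu>1 else \<mu>0) \<sigma> x)"
  have density: "pair_law \<mu>0 \<mu>1 \<sigma> = density (count_space UNIV \<Otimes>\<^sub>M lborel) g"
    by (simp add: pair_law_def g_def case_prod_unfold)
  have [measurable]: "g \<in> borel_measurable (count_space UNIV \<Otimes>\<^sub>M lborel)"
    unfolding g_def gauss_pdf_def by (intro measurable_pair_measure_countable1) auto
  have [measurable]: "(\<lambda>(z, x). h z x) \<in> borel_measurable (count_space UNIV \<Otimes>\<^sub>M lborel)"
    by (intro measurable_pair_measure_countable1) auto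
  have g_nonneg: "g p \<ge> 0" for p
    by (simp add: g_def gauss_pdf_def prod_nonneg split: prod.split)
  have fibre: "has_bochner_integral lborel (\<lambda>x. g (z, x) *\<^sub>R h z x) ((1 / 2) *\<^sub>R (if z then I1 else I0))"
    for z
    using has_bochner_integral_scaleR_right[where c = "1 / 2", OF I0]
      has_bochner_integral_scaleR_right[where c = "1 / 2", OF I1]
    by (cases z) (simp_all add: g_def)
  have "(\<Sum>z\<in>UNIV. (1 / 2) *\<^sub>R (if z then I1 else I0)) = (1 / 2) *\<^sub>R (I0 + I1)"
    by (simp add: UNIV_bool scaleR_add_right add.commute)
  then have "has_bochner_integral (count_space UNIV \<Otimes>\<^sub>M lborel)
      (\<lambda>p. g p *\<^sub>R (case p of (z, x) \<Rightarrow> h z x))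
      ((1 / 2) *\<^sub>R (I0 + I1))"
    using has_bochner_integral_count_space_pair[of lborel "\<lambda>p. g p *\<^sub>R (case p of (z, x) \<Rightarrow> h z x)"
        "\<lambda>z. (1 / 2) *\<^sub>R (if z then I1 else I0)"] fibre lborel.sigma_finite_measure_axioms
    by simp
  then show ?thesis
    unfolding density by (intro has_bochner_integral_density) (auto simp: g_nonneg)
qed

lemma prob_space_pair_law:
  fixes \<mu>0 \<mu>1 :: "real^'d"
  assumes "\<sigma> > 0"
  shows "prob_space (pair_law \<mu>0 \<mu>1 \<sigma>)"
proof
  let ?Q = "pair_law \<mu>0 \<mu>1 \<sigma>"
  have "has_bochner_integral ?Q (\<lambda>(z, x). 1::real) ((1 / 2) *\<^sub>R (1 + 1))"
    by (intro has_bochner_integral_pair_law) (simp_all add: has_bochner_integral_gauss_pdf assms)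
  moreover have "(\<lambda>(z, x). 1::real) = (\<lambda>_::bool \<times> (real^'d). 1)"
    by auto
  ultimately have "integrable ?Q (\<lambda>_. 1::real)" and "measure ?Q (space ?Q) = 1"
    by (simp_all add: has_bochner_integral_iff)
  then show "emeasure ?Q (space ?Q) = 1"
    by (simp add: integrable_iff_bounded nn_integral_const less_top emeasure_eq_ennreal_measure)
qed

lemma has_bochner_integral_pair_law_label:
  fixes \<mu>0 \<mu>1 :: "real^'d" and f :: "real^'d \<Rightarrow> real"
  assumes [measurable]: "f \<in> borel_measurable borel"
    and f: "has_bochner_integral lborel (\<lambda>x. gauss_pdf (if c then \<mu>1 else \<mu>0) \<sigma> x * f x) A"
  shows "has_bochner_integral (pair_law \<mu>0 \<mu>1 \<sigma>) (\<lambda>(z, x). if z = c then f x else 0) (A / 2)"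
proof -
  have "has_bochner_integral lborel (\<lambda>x. gauss_pdf \<mu>0 \<sigma> x *\<^sub>R (if False = c then f x else 0))
      (if c then 0 else A)"
    using f by (cases c) (simp_all add: has_bochner_integral_zero)
  moreover have "has_bochner_integral lborel (\<lambda>x. gauss_pdf \<mu>1 \<sigma> x *\<^sub>R (if True = c then f x else 0))
      (if c then A else 0)"
    using f by (cases c) (simp_all add: has_bochner_integral_zero)
  ultimately have "has_bochner_integral (pair_law \<mu>0 \<mu>1 \<sigma>) (\<lambda>(z, x). if z = c then f x else 0)
      ((1 / 2) *\<^sub>R ((if c then 0 else A) + (if c then A else 0)))"
    by (intro has_bochner_integral_pair_law) simp_all
  then show ?thesis
    by (cases c) simp_all
qed

lemma has_bochner_integral_pair_law_coordinate_product:
  assumes "\<sigma> > 0"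
  shows "has_bochner_integral (pair_law \<mu>0 \<mu>1 \<sigma>) (\<lambda>(z, x). x $ j * x $ i)
           ((\<mu>0 $ j * \<mu>0 $ i + \<mu>1 $ j * \<mu>1 $ i) / 2 + (if i = j then \<sigma>\<^sup>2 else 0))"
proof -
  have "(\<mu>0 $ j * \<mu>0 $ i + \<mu>1 $ j * \<mu>1 $ i) / 2 + (if i = j then \<sigma>\<^sup>2 else 0) =
      (1 / 2) *\<^sub>R ((\<mu>0 $ j * \<mu>0 $ i + (if i = j then \<sigma>\<^sup>2 else 0)) +
                   (\<mu>1 $ j * \<mu>1 $ i + (if i = j then \<sigma>\<^sup>2 else 0)))"
    by (cases "i = j") (simp_all add: field_simps)
  then show ?thesis
    by (simp only:) (intro has_bochner_integral_pair_law;
        simp add: has_bochner_integral_gauss_pdf_coordinate_product assms)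
qed

lemma has_bochner_integral_PiM_prod:
  fixes f :: "'i \<Rightarrow> 'a \<Rightarrow> real"
  assumes "prob_space M" and "finite I" and "J \<subseteq> I"
    and f: "\<And>j. j \<in> J \<Longrightarrow> has_bochner_integral M (f j) (c j)"
  shows "has_bochner_integral (\<Pi>\<^sub>M i\<in>I. M) (\<lambda>\<omega>. \<Prod>j\<in>J. f j (\<omega> j)) (\<Prod>j\<in>J. c j)"
proof -
  interpret prob_space M by fact
  interpret product_sigma_finite "\<lambda>_::'i. M"
    by (simp add: product_sigma_finite_def sigma_finite_measure)
  define g where "g i = (if i \<in> J then f i else (\<lambda>_. 1))" for i
  have "has_bochner_integral M (g i) (if i \<in> J then c i else 1)" for i
    using f by (simp add: g_def has_bochner_integral_iff prob_space)
  then have "has_bochner_integral (\<Pi>\<^sub>M i\<in>I. M) (\<lambda>\<omega>. \<Prod>i\<in>I. g i (\<omega> i))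
      (\<Prod>i\<in>I. if i \<in> J then c i else 1)"
    using product_integral_prod[of I g] product_integrable_prod[of I g] \<open>finite I\<close>
    by (auto simp: has_bochner_integral_iff)
  moreover have "(\<Prod>i\<in>I. g i (\<omega> i)) = (\<Prod>j\<in>J. f j (\<omega> j))" for \<omega>
    using \<open>J \<subseteq> I\<close> \<open>finite I\<close>
    by (simp add: g_def if_distrib[of "\<lambda>h. h _"] prod.If_cases Int_absorb1 cong: if_cong)
  moreover have "(\<Prod>i\<in>I. if i \<in> J then c i else 1) = (\<Prod>j\<in>J. c j)"
    using \<open>J \<subseteq> I\<close> \<open>finite I\<close> by (simp add: prod.If_cases Int_absorb1)
  ultimately show ?thesis
    by simp
qed

lemma has_bochner_integral_sample_law_label:
  fixes \<mu>0 \<mu>1 :: "real^'d" and f :: "real^'d \<Rightarrow> real"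
  assumes "\<sigma> > 0" and "k \<in> {1..L}" and "f \<in> borel_measurable borel"
    and "has_bochner_integral lborel (\<lambda>x. gauss_pdf (if c then \<mu>1 else \<mu>0) \<sigma> x * f x) A"
  shows "has_bochner_integral (sample_law L \<mu>0 \<mu>1 \<sigma>)
           (\<lambda>w. if fst (w k) = c then f (snd (w k)) else 0) (A / 2)"
  using has_bochner_integral_PiM_prod[OF prob_space_pair_law[OF \<open>\<sigma> > 0\<close>], where I = "{1..L}"
      and J = "{k}" and f = "\<lambda>_ (z, x). if z = c then f x else 0" and c = "\<lambda>_. A / 2"]
    has_bochner_integral_pair_law_label[OF assms(3,4)] \<open>k \<in> {1..L}\<close>
  by (simp add: sample_law_def case_prod_unfold)

lemma measure_sample_law_label:
  fixes \<mu>0 \<mu>1 :: "real^'d"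
  assumes "\<sigma> > 0" and "k \<in> {1..L}"
  shows "measure (sample_law L \<mu>0 \<mu>1 \<sigma>) {w \<in> space (sample_law L \<mu>0 \<mu>1 \<sigma>). fst (w k) = c} = 1 / 2"
proof -
  let ?P = "sample_law L \<mu>0 \<mu>1 \<sigma>"
  have "has_bochner_integral ?P (\<lambda>w. if fst (w k) = c then 1 else 0) (1 / 2 :: real)"
    by (intro has_bochner_integral_sample_law_label assms) (simp_all add: has_bochner_integral_gauss_pdf assms)
  moreover have "indicator {w \<in> space ?P. fst (w k) = c} w = (if fst (w k) = c then 1 else 0 :: real)"
    if "w \<in> space ?P" for w
    using that by simp
  ultimately have "has_bochner_integral ?P (indicator {w \<in> space ?P. fst (w k) = c}) (1 / 2 :: real)"
    by (subst has_bochner_integral_cong[OF refl _ refl]) auto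
  moreover have "{w \<in> space ?P. fst (w k) = c} \<inter> space ?P = {w \<in> space ?P. fst (w k) = c}"
    by auto
  ultimately show ?thesis
    by (simp add: has_bochner_integral_iff)
qed

lemma has_bochner_integral_sample_law_cross:
  fixes \<mu>0 \<mu>1 :: "real^'d" and c :: bool
  assumes "\<sigma> > 0" and "k \<in> {1..L}" and "l \<in> {1..L}" and "k \<noteq> l"
  defines "\<mu>c \<equiv> if c then \<mu>1 else \<mu>0"
  shows "has_bochner_integral (sample_law L \<mu>0 \<mu>1 \<sigma>)
           (\<lambda>w. if fst (w k) = c then (snd (w k) \<bullet> snd (w l)) * snd (w l) $ i else 0)
           (((\<mu>c \<bullet> \<mu>0) * \<mu>0 $ i + (\<mu>c \<bullet> \<mu>1) * \<mu>1 $ i + 2 * \<sigma>\<^sup>2 * \<mu>c $ i) / 4)"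
proof -
  let ?Q = "pair_law \<mu>0 \<mu>1 \<sigma>"
  define second_moment where
    "second_moment j = (\<mu>0 $ j * \<mu>0 $ i + \<mu>1 $ j * \<mu>1 $ i) / 2 + (if i = j then \<sigma>\<^sup>2 else 0)" for j
  have label: "has_bochner_integral ?Q (\<lambda>(z, x). if z = c then x $ j else 0) (\<mu>c $ j / 2)" for j
    unfolding \<mu>c_def
    by (intro has_bochner_integral_pair_law_label has_bochner_integral_gauss_pdf_coordinate assms) simp
  have moment: "has_bochner_integral ?Q (\<lambda>(z, x). x $ j * x $ i) (second_moment j)" for j
    unfolding second_moment_def by (rule has_bochner_integral_pair_law_coordinate_product[OF assms(1)])
  define F :: "'d \<Rightarrow> nat \<Rightarrow> bool \<times> (real^'d) \<Rightarrow> real" where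
    "F j m = (if m = k then (\<lambda>(z, x). if z = c then x $ j else 0) else (\<lambda>(z, x). x $ j * x $ i))" for j m
  have "has_bochner_integral (sample_law L \<mu>0 \<mu>1 \<sigma>) (\<lambda>w. \<Prod>m\<in>{k, l}. F j m (w m))
      (\<Prod>m\<in>{k, l}. if m = k then \<mu>c $ j / 2 else second_moment j)" for j
    unfolding sample_law_def using assms label moment
    by (intro has_bochner_integral_PiM_prod prob_space_pair_law) (auto simp: F_def)
  then have "has_bochner_integral (sample_law L \<mu>0 \<mu>1 \<sigma>)
      (\<lambda>w. \<Sum>j\<in>UNIV. \<Prod>m\<in>{k, l}. F j m (w m))
      (\<Sum>j\<in>UNIV. \<Prod>m\<in>{k, l}. if m = k then \<mu>c $ j / 2 else second_moment j)"
    by (intro has_bochner_integral_sum)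
  moreover have "(\<Sum>j\<in>UNIV. \<Prod>m\<in>{k, l}. F j m (w m)) =
      (if fst (w k) = c then (snd (w k) \<bullet> snd (w l)) * snd (w l) $ i else 0)" for w
    using \<open>k \<noteq> l\<close>
    by (simp add: F_def case_prod_unfold inner_vec_def sum_distrib_right mult.assoc)
  moreover have "(\<Sum>j\<in>UNIV. \<Prod>m\<in>{k, l}. if m = k then \<mu>c $ j / 2 else second_moment j) =
      ((\<mu>c \<bullet> \<mu>0) * \<mu>0 $ i + (\<mu>c \<bullet> \<mu>1) * \<mu>1 $ i + 2 * \<sigma>\<^sup>2 * \<mu>c $ i) / 4"
  proof -
    have "(\<Prod>m\<in>{k, l}. if m = k then \<mu>c $ j / 2 else second_moment j) =
        ((\<mu>c $ j * \<mu>0 $ j) * \<mu>0 $ i + (\<mu>c $ j * \<mu>1 $ j) * \<mu>1 $ i +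
         (if i = j then 2 * \<sigma>\<^sup>2 * \<mu>c $ j else 0)) / 4" for j
      using \<open>k \<noteq> l\<close> by (simp add: second_moment_def field_simps)
    then show ?thesis
      by (simp add: inner_vec_def sum_divide_distrib sum.distrib sum_distrib_right)
  qed
  ultimately show ?thesis
    by simp
qed

lemma has_bochner_integral_sample_law_attention_term:
  fixes \<mu>0 \<mu>1 :: "real^'d" and c :: bool
  assumes "\<sigma> > 0" and "k \<in> {1..L}" and "norm \<mu>0 = 1" and "norm \<mu>1 = 1" and "\<mu>0 \<bullet> \<mu>1 = 0"
  defines "\<mu>c \<equiv> if c then \<mu>1 else \<mu>0"
  shows "has_bochner_integral (sample_law L \<mu>0 \<mu>1 \<sigma>)
           (\<lambda>w. if fst (w 1) = c then (snd (w 1) \<bullet> snd (w k)) * snd (w k) $ i else 0)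
           ((if k = 1 then (1 + (real CARD('d) + 2) * \<sigma>\<^sup>2) / 2 else (1 + 2 * \<sigma>\<^sup>2) / 4) * \<mu>c $ i)"
proof (cases "k = 1")
  case True
  have "\<mu>c \<bullet> \<mu>c = 1"
    using assms(3,4) by (simp add: \<mu>c_def power2_norm_eq_inner[symmetric])
  moreover have "has_bochner_integral (sample_law L \<mu>0 \<mu>1 \<sigma>)
      (\<lambda>w. if fst (w 1) = c then (snd (w 1) \<bullet> snd (w 1)) * snd (w 1) $ i else 0)
      ((\<mu>c \<bullet> \<mu>c + (real CARD('d) + 2) * \<sigma>\<^sup>2) * \<mu>c $ i / 2)"
    unfolding \<mu>c_def using \<open>k \<in> {1..L}\<close> True
    by (intro has_bochner_integral_sample_law_label has_bochner_integral_gauss_pdf_norm_sq_coordinate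
        \<open>\<sigma> > 0\<close>) auto
  ultimately show ?thesis
    unfolding True by simp
next
  case False
  have expansion: "(\<mu>c \<bullet> \<mu>0) * \<mu>0 $ i + (\<mu>c \<bullet> \<mu>1) * \<mu>1 $ i = \<mu>c $ i"
    using assms(3-5) by (simp add: \<mu>c_def inner_commute power2_norm_eq_inner[symmetric])
  have "has_bochner_integral (sample_law L \<mu>0 \<mu>1 \<sigma>)
      (\<lambda>w. if fst (w 1) = c then (snd (w 1) \<bullet> snd (w k)) * snd (w k) $ i else 0)
      (((\<mu>c \<bullet> \<mu>0) * \<mu>0 $ i + (\<mu>c \<bullet> \<mu>1) * \<mu>1 $ i + 2 * \<sigma>\<^sup>2 * \<mu>c $ i) / 4)"
    unfolding \<mu>c_def using False \<open>k \<in> {1..L}\<close>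
    by (intro has_bochner_integral_sample_law_cross \<open>\<sigma> > 0\<close>) auto
  then show ?thesis
    using False unfolding expansion by (simp add: algebra_simps)
qed

lemma has_bochner_integral_attention_given_first_label:
  fixes \<mu>0 \<mu>1 :: "real^'d" and c :: bool
  assumes "\<sigma> > 0" and "L \<ge> 1" and "norm \<mu>0 = 1" and "norm \<mu>1 = 1" and "\<mu>0 \<bullet> \<mu>1 = 0"
  defines "\<mu>c \<equiv> if c then \<mu>1 else \<mu>0"
    and "E \<equiv> {w \<in> space (sample_law L \<mu>0 \<mu>1 \<sigma>). fst (w 1) = c}"
    and "K \<equiv> (1 + (real CARD('d) + 2) * \<sigma>\<^sup>2) + (real L - 1) * (1 / 2 + \<sigma>\<^sup>2)"
  shows "has_bochner_integral (sample_law L \<mu>0 \<mu>1 \<sigma>)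
           (\<lambda>w. indicator E w *\<^sub>R T_ctx lam L (\<lambda>l. snd (w l)) 1) ((lam / real L * K) *\<^sub>R \<mu>c)"
proof (rule has_bochner_integral_vec_componentwise)
  fix i :: 'd
  let ?P = "sample_law L \<mu>0 \<mu>1 \<sigma>"
  let ?term = "\<lambda>k w. if fst (w 1) = c then (snd (w 1) \<bullet> snd (w k)) * snd (w k) $ i else 0"
  define v where "v k = (if k = 1 then (1 + (real CARD('d) + 2) * \<sigma>\<^sup>2) / 2 else (1 + 2 * \<sigma>\<^sup>2) / 4) * \<mu>c $ i"
    for k :: nat
  have "has_bochner_integral ?P (\<lambda>w. (2 * lam / real L) * (\<Sum>k\<in>{1..L}. ?term k w))
      ((2 * lam / real L) * (\<Sum>k\<in>{1..L}. v k))"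
    unfolding v_def \<mu>c_def using assms(1,3-5)
    by (intro has_bochner_integral_mult_right has_bochner_integral_sum
        has_bochner_integral_sample_law_attention_term) auto
  moreover have "(\<Sum>k\<in>{1..L}. v k) = K * \<mu>c $ i / 2"
  proof -
    have "(\<Sum>k\<in>{1..L}. v k) = v 1 + (\<Sum>k\<in>{1..L} - {1}. v k)"
      using \<open>L \<ge> 1\<close> by (simp add: sum.remove)
    also have "(\<Sum>k\<in>{1..L} - {1}. v k) = (real L - 1) * ((1 + 2 * \<sigma>\<^sup>2) / 4 * \<mu>c $ i)"
      using \<open>L \<ge> 1\<close> by (simp add: v_def of_nat_diff)
    finally show ?thesis
      by (simp add: v_def K_def field_simps)
  qed
  moreover have "(indicator E w *\<^sub>R T_ctx lam L (\<lambda>l. snd (w l)) 1) $ i =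
      (2 * lam / real L) * (\<Sum>k\<in>{1..L}. ?term k w)" if "w \<in> space ?P" for w
    using that by (simp add: E_def T_ctx_def indicator_def sum_distrib_left)
  ultimately show "has_bochner_integral ?P (\<lambda>w. (indicator E w *\<^sub>R T_ctx lam L (\<lambda>l. snd (w l)) 1) $ i)
      (((lam / real L * K) *\<^sub>R \<mu>c) $ i)"
    by (subst has_bochner_integral_cong[OF refl _ refl]) (auto simp: field_simps)
qed

theorem proposition5:
  fixes mu0 mu1 :: "real^'d" and L :: nat and sig lam :: real and c :: bool
  assumes "CARD('d) \<ge> 2" and "L \<ge> 1" and "sig > 0" and "lam > 0"
    and "norm mu0 = 1" and "norm mu1 = 1" and "mu0 \<bullet> mu1 = 0"
  defines "P \<equiv> sample_law L mu0 mu1 sig"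
    and "E \<equiv> {w \<in> space (sample_law L mu0 mu1 sig). fst (w 1) = c}"
    and "mu_c \<equiv> (if c then mu1 else mu0)"
  shows "(cond_exp_event P E (\<lambda>w. T_ctx lam L (\<lambda>l. snd (w l)) 1)
           = (2 * lam / real L) *\<^sub>R
               (((1 + (real CARD('d) + 2) * sig^2) + (real L - 1) * (1/2 + sig^2)) *\<^sub>R mu_c))
       \<and> (lam = real L / 2 * (1 / (1 + (real CARD('d) + 2) * sig^2 + (real L - 1) * (1/2 + sig^2)))
         \<longrightarrow> cond_exp_event P E (\<lambda>w. T_ctx lam L (\<lambda>l. snd (w l)) 1) = mu_c)"
proof -
  define K where "K = (1 + (real CARD('d) + 2) * sig^2) + (real L - 1) * (1/2 + sig^2)"
  have "has_bochner_integral P (\<lambda>w. indicator E w *\<^sub>R T_ctx lam L (\<lambda>l. snd (w l)) 1)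
      ((lam / real L * K) *\<^sub>R mu_c)"
    unfolding P_def E_def mu_c_def K_def
    using has_bochner_integral_attention_given_first_label assms(2,3,5-7) by blast
  then have integral: "(LINT w:E|P. T_ctx lam L (\<lambda>l. snd (w l)) 1) = (lam / real L * K) *\<^sub>R mu_c"
    by (simp add: set_lebesgue_integral_def has_bochner_integral_iff)
  have measure: "measure P E = 1 / 2"
    unfolding P_def E_def using assms(2,3) by (intro measure_sample_law_label) auto
  have expectation: "cond_exp_event P E (\<lambda>w. T_ctx lam L (\<lambda>l. snd (w l)) 1) =
      (2 * lam / real L) *\<^sub>R (K *\<^sub>R mu_c)"
    unfolding cond_exp_event_def integral measure by simp
  have "K > 0"
    unfolding K_def using \<open>L \<ge> 1\<close> by (intro add_pos_nonneg) auto
  show ?thesis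
    unfolding K_def[symmetric]
  proof (intro conjI impI)
    show "cond_exp_event P E (\<lambda>w. T_ctx lam L (\<lambda>l. snd (w l)) 1) = (2 * lam / real L) *\<^sub>R (K *\<^sub>R mu_c)"
      by (fact expectation)
    assume "lam = real L / 2 * (1 / K)"
    then have normalised: "2 * lam / real L * K = 1"
      using \<open>K > 0\<close> \<open>L \<ge> 1\<close> by simp
    show "cond_exp_event P E (\<lambda>w. T_ctx lam L (\<lambda>l. snd (w l)) 1) = mu_c"
      unfolding expectation scaleR_scaleR normalised by simp
  qed
qed

end
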